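(* Consider the Geo/Geo/1/K queue described in the context and let the performance be the blocking indicator $Z_n=\mathbf 1\{X_n=K\}$ (an arrival in slot $n$ is blocked iff the queue is full). For an observed queue size $x\in\{0,\dots,K\}$ and lead time $L\ge0$, $$D_n(L)=\big|P^L(x,K)-\pi(K)\big|=\Big|\frac{2}{K+1}\beta^{\frac{K-x}{2}}\sum_{k=1}^K\frac{\gamma_k^L}{1-2\sqrt\beta\cos\frac{k\pi}{K+1}+\beta}\Big[\sin\tfrac{xk\pi}{K+1}-\sqrt\beta\sin\tfrac{(x+1)k\pi}{K+1}\Big]\sin\tfrac{Kk\pi}{K+1}\Big|,$$ where $\gamma_k=\alpha\mu+\bar\alpha\bar\mu+2\sqrt{\alpha\mu\bar\alpha\bar\mu}\cos\frac{k\pi}{K+1}$ and $\beta=\frac{\alpha\bar\mu}{\mu\bar\alpha}$.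
   Context: Geo/Geo/1/K queue: parameters $\alpha,\mu\in(0,1)$, $\bar\alpha=1-\alpha$, $\bar\mu=1-\mu$, buffer size $K\ge1$, with $\beta=\alpha\bar\mu/(\mu\bar\alpha)\ne1$. The queue size $(X_n)$ is a Markov chain on $\{0,\dots,K\}$ with $P(i,i+1)=\alpha\bar\mu$ for $0\le i\le K-1$; $P(i,i-1)=\mu\bar\alpha$ for $1\le i\le K$; $P(0,0)=1-\alpha\bar\mu$; $P(i,i)=\alpha\mu+\bar\alpha\bar\mu$ for $1\le i\le K-1$; $P(K,K)=1-\mu\bar\alpha$; all other entries $0$; $P^L$ is its $L$-th power. Its stationary distribution is $\pi(y)=\frac{1-\beta}{1-\beta^{K+1}}\beta^y$, and the chain is started in $\pi$. $\|p-q\|_{TV}=\frac12\sum_z|p(z)-q(z)|$; predictability $D_n(L)=\|\Pr(Z_{n+L}\in\cdot\mid X_n=x)-\Pr(Z_{n+L}\in\cdot)\|_{TV}$. *)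

theory Defs
  imports Complex_Main
begin

definition geoP :: "real \<Rightarrow> real \<Rightarrow> nat \<Rightarrow> nat \<Rightarrow> nat \<Rightarrow> real" where
  "geoP \<alpha> \<mu> K i j =
    (if i \<le> K \<and> j \<le> K then
       (if j = i + 1 then \<alpha> * (1 - \<mu>)
        else if i = j + 1 then \<mu> * (1 - \<alpha>)
        else if i = j then
          (if i = 0 then 1 - \<alpha> * (1 - \<mu>)
           else if i = K then 1 - \<mu> * (1 - \<alpha>)
           else \<alpha> * \<mu> + (1 - \<alpha>) * (1 - \<mu>))
        else 0)
     else 0)"

fun geoPpow :: "real \<Rightarrow> real \<Rightarrow> nat \<Rightarrow> nat \<Rightarrow> nat \<Rightarrow> nat \<Rightarrow> real" where
  "geoPpow \<alpha> \<mu> K 0 i j = (if i = j then 1 else 0)"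
| "geoPpow \<alpha> \<mu> K (Suc L) i j = (\<Sum>m\<le>K. geoPpow \<alpha> \<mu> K L i m * geoP \<alpha> \<mu> K m j)"

definition geo_beta :: "real \<Rightarrow> real \<Rightarrow> real" where
  "geo_beta \<alpha> \<mu> = \<alpha> * (1 - \<mu>) / (\<mu> * (1 - \<alpha>))"

definition geo_pi :: "real \<Rightarrow> real \<Rightarrow> nat \<Rightarrow> nat \<Rightarrow> real" where
  "geo_pi \<alpha> \<mu> K y = (1 - geo_beta \<alpha> \<mu>) / (1 - geo_beta \<alpha> \<mu> ^ (K + 1)) * geo_beta \<alpha> \<mu> ^ y"

definition block_ind :: "nat \<Rightarrow> nat \<Rightarrow> nat" where
  "block_ind K y = (if y = K then 1 else 0)"

definition cond_law_Z :: "real \<Rightarrow> real \<Rightarrow> nat \<Rightarrow> nat \<Rightarrow> nat \<Rightarrow> nat \<Rightarrow> real" where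
  "cond_law_Z \<alpha> \<mu> K L x z = (\<Sum>y\<in>{y. y \<le> K \<and> block_ind K y = z}. geoPpow \<alpha> \<mu> K L x y)"

text \<open>Pr(Z_m = z) when X_0 is distributed as pi: law of X_m is pi P^m.\<close>
definition law_Z :: "real \<Rightarrow> real \<Rightarrow> nat \<Rightarrow> nat \<Rightarrow> nat \<Rightarrow> real" where
  "law_Z \<alpha> \<mu> K m z = (\<Sum>y\<in>{y. y \<le> K \<and> block_ind K y = z}.
      \<Sum>w\<le>K. geo_pi \<alpha> \<mu> K w * geoPpow \<alpha> \<mu> K m w y)"

definition tv01 :: "(nat \<Rightarrow> real) \<Rightarrow> (nat \<Rightarrow> real) \<Rightarrow> real" where
  "tv01 p q = (1/2) * (\<Sum>z\<in>{0,1}. \<bar>p z - q z\<bar>)"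

definition predictability :: "real \<Rightarrow> real \<Rightarrow> nat \<Rightarrow> nat \<Rightarrow> nat \<Rightarrow> nat \<Rightarrow> real" where
  "predictability \<alpha> \<mu> K n L x = tv01 (cond_law_Z \<alpha> \<mu> K L x) (law_Z \<alpha> \<mu> K (n + L))"

end

theory Submission
  imports Defs
begin

(* The chain is reversible with respect to pi (detailed balance), so pi is stationary and, Z being
   a 0/1 variable, the predictability is |P^L(x,K) - pi(K)|.  For the spectral formula put
   s = sqrt beta and theta_k = k pi/(K+1).  For k = 1..K the vector
   y \<mapsto> s^(K-y) (sin (y theta_k) - s sin ((y+1) theta_k)) is a right eigenvector of P with
   eigenvalue gamma_k (the boundary row at K holds because sin ((K+1) theta_k) = 0), and the
   constant vector has eigenvalue 1.  Discrete sine orthogonality expands the indicator of K in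
   these K+1 eigenvectors, the constant coefficient being pi(K); applying P^L to the expansion
   multiplies the k-th term by gamma_k^L. *)

lemma geoP_row_expand:
  assumes "x \<le> K"
  shows "(\<Sum>m\<le>K. geoP \<alpha> \<mu> K x m * f m) =
      (if x < K then \<alpha> * (1 - \<mu>) * f (x + 1) else 0)
    + (if 0 < x then \<mu> * (1 - \<alpha>) * f (x - 1) else 0)
    + (if x = 0 then 1 - \<alpha> * (1 - \<mu>) else if x = K then 1 - \<mu> * (1 - \<alpha>)
       else \<alpha> * \<mu> + (1 - \<alpha>) * (1 - \<mu>)) * f x"
proof -
  let ?d = "if x = 0 then 1 - \<alpha> * (1 - \<mu>) else if x = K then 1 - \<mu> * (1 - \<alpha>)
            else \<alpha> * \<mu> + (1 - \<alpha>) * (1 - \<mu>)"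
  have "(\<Sum>m\<le>K. geoP \<alpha> \<mu> K x m * f m) =
      (\<Sum>m\<le>K. if m = x + 1 then \<alpha> * (1 - \<mu>) * f m else 0)
    + (\<Sum>m\<le>K. if 0 < x then if m = x - 1 then \<mu> * (1 - \<alpha>) * f m else 0 else 0)
    + (\<Sum>m\<le>K. if m = x then ?d * f m else 0)"
    unfolding sum.distrib[symmetric] using assms
    by (intro sum.cong) (auto simp: geoP_def)
  then show ?thesis
    using assms by auto
qed

lemma geoP_row_sum:
  assumes "x \<le> K" "1 \<le> K"
  shows "(\<Sum>m\<le>K. geoP \<alpha> \<mu> K x m) = 1"
  using geoP_row_expand[OF assms(1), of \<alpha> \<mu> "\<lambda>_. 1"] assms by (auto simp: algebra_simps)

lemma geoPpow_right_eigen: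
  assumes eigen: "\<And>m. m \<le> K \<Longrightarrow> (\<Sum>j\<le>K. geoP \<alpha> \<mu> K m j * v j) = \<gamma> * v m"
    and "y \<le> K"
  shows "(\<Sum>m\<le>K. geoPpow \<alpha> \<mu> K L y m * v m) = \<gamma> ^ L * v y"
proof (induction L)
  case 0
  have "geoPpow \<alpha> \<mu> K 0 y m * v m = (if y = m then v m else 0)" for m
    by simp
  then show ?case using \<open>y \<le> K\<close> by (simp add: sum.delta)
next
  case (Suc L)
  have "(\<Sum>j\<le>K. geoPpow \<alpha> \<mu> K (Suc L) y j * v j)
      = (\<Sum>m\<le>K. geoPpow \<alpha> \<mu> K L y m * (\<Sum>j\<le>K. geoP \<alpha> \<mu> K m j * v j))"
    unfolding geoPpow.simps sum_distrib_left sum_distrib_right mult.assoc by (rule sum.swap)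
  also have "\<dots> = \<gamma> * (\<Sum>m\<le>K. geoPpow \<alpha> \<mu> K L y m * v m)"
    by (simp add: eigen sum_distrib_left mult.left_commute)
  finally show ?case using Suc by simp
qed

lemma geoPpow_row_sum:
  assumes "x \<le> K" "1 \<le> K"
  shows "(\<Sum>y\<le>K. geoPpow \<alpha> \<mu> K L x y) = 1"
  using geoPpow_right_eigen[of K \<alpha> \<mu> "\<lambda>_. 1" 1 x L] geoP_row_sum assms by simp

lemma geoPpow_left_invariant:
  assumes inv: "\<And>y. y \<le> K \<Longrightarrow> (\<Sum>w\<le>K. p w * geoP \<alpha> \<mu> K w y) = p y"
    and "y \<le> K"
  shows "(\<Sum>w\<le>K. p w * geoPpow \<alpha> \<mu> K L w y) = p y"
  using \<open>y \<le> K\<close>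
proof (induction L arbitrary: y)
  case 0
  have "p w * geoPpow \<alpha> \<mu> K 0 w y = (if w = y then p w else 0)" for w
    by simp
  then show ?case using 0 by (simp add: sum.delta')
next
  case (Suc L)
  have "(\<Sum>w\<le>K. p w * geoPpow \<alpha> \<mu> K (Suc L) w y)
      = (\<Sum>m\<le>K. (\<Sum>w\<le>K. p w * geoPpow \<alpha> \<mu> K L w m) * geoP \<alpha> \<mu> K m y)"
    unfolding geoPpow.simps sum_distrib_left sum_distrib_right mult.assoc by (rule sum.swap)
  also have "\<dots> = p y"
    using Suc inv by simp
  finally show ?case .
qed

lemma geo_beta_balance:
  assumes "\<mu> * (1 - \<alpha>) \<noteq> 0"
  shows "\<alpha> * (1 - \<mu>) = \<mu> * (1 - \<alpha>) * geo_beta \<alpha> \<mu>"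
  using assms unfolding geo_beta_def by simp

lemma geo_beta_pos:
  assumes "0 < \<alpha>" "\<alpha> < 1" "0 < \<mu>" "\<mu> < 1"
  shows "0 < geo_beta \<alpha> \<mu>"
  unfolding geo_beta_def using assms by simp

lemma geoP_detailed_balance:
  assumes "\<mu> * (1 - \<alpha>) \<noteq> 0"
  shows "geo_beta \<alpha> \<mu> ^ i * geoP \<alpha> \<mu> K i j = geo_beta \<alpha> \<mu> ^ j * geoP \<alpha> \<mu> K j i"
proof -
  have "geo_beta \<alpha> \<mu> * (\<mu> * (1 - \<alpha>)) = \<alpha> * (1 - \<mu>)"
    using geo_beta_balance[OF assms] by simp
  then show ?thesis
    unfolding geoP_def by (cases "i = j + 1"; cases "j = i + 1"; simp add: algebra_simps)
qed

lemma geo_pi_invariant: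
  assumes "\<mu> * (1 - \<alpha>) \<noteq> 0" "1 \<le> K" "y \<le> K"
  shows "(\<Sum>w\<le>K. geo_pi \<alpha> \<mu> K w * geoPpow \<alpha> \<mu> K L w y) = geo_pi \<alpha> \<mu> K y"
proof (rule geoPpow_left_invariant[OF _ assms(3)])
  fix y assume "y \<le> K"
  have "(\<Sum>w\<le>K. geo_pi \<alpha> \<mu> K w * geoP \<alpha> \<mu> K w y)
      = geo_pi \<alpha> \<mu> K y * (\<Sum>w\<le>K. geoP \<alpha> \<mu> K y w)"
    unfolding geo_pi_def sum_distrib_left
    by (intro sum.cong) (simp_all add: geoP_detailed_balance[OF assms(1)] mult_ac)
  then show "(\<Sum>w\<le>K. geo_pi \<alpha> \<mu> K w * geoP \<alpha> \<mu> K w y) = geo_pi \<alpha> \<mu> K y"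
    using geoP_row_sum[OF \<open>y \<le> K\<close> assms(2)] by simp
qed

lemma geo_pi_eq:
  assumes "geo_beta \<alpha> \<mu> \<noteq> 1"
  shows "geo_pi \<alpha> \<mu> K y = geo_beta \<alpha> \<mu> ^ y / (\<Sum>i\<le>K. geo_beta \<alpha> \<mu> ^ i)"
proof -
  have "(\<Sum>i\<le>K. geo_beta \<alpha> \<mu> ^ i) = (1 - geo_beta \<alpha> \<mu> ^ (K + 1)) / (1 - geo_beta \<alpha> \<mu>)"
    using sum_gp_strict[of "geo_beta \<alpha> \<mu>" "K + 1"] assms by (simp add: lessThan_Suc_atMost)
  then show ?thesis
    unfolding geo_pi_def using assms by simp
qed

lemma geo_pi_sum:
  assumes "0 < \<alpha>" "\<alpha> < 1" "0 < \<mu>" "\<mu> < 1" "geo_beta \<alpha> \<mu> \<noteq> 1"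
  shows "(\<Sum>y\<le>K. geo_pi \<alpha> \<mu> K y) = 1"
proof -
  have "(\<Sum>i\<le>K. geo_beta \<alpha> \<mu> ^ i) > 0"
    using geo_beta_pos[OF assms(1-4)] by (intro sum_pos) auto
  then show ?thesis
    unfolding geo_pi_eq[OF assms(5)] sum_divide_distrib[symmetric] by simp
qed

lemma tv01_eq: "tv01 p q = (\<bar>p 0 - q 0\<bar> + \<bar>p 1 - q 1\<bar>) / 2"
  unfolding tv01_def by simp

lemma predictability_eq_abs_diff:
  assumes "0 < \<alpha>" "\<alpha> < 1" "0 < \<mu>" "\<mu> < 1" "1 \<le> K" "geo_beta \<alpha> \<mu> \<noteq> 1" "x \<le> K"
  shows "predictability \<alpha> \<mu> K n L x = \<bar>geoPpow \<alpha> \<mu> K L x K - geo_pi \<alpha> \<mu> K K\<bar>"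
proof -
  have blocked: "{y. y \<le> K \<and> block_ind K y = 1} = {K}"
    and free: "{y. y \<le> K \<and> block_ind K y = 0} = {..<K}"
    unfolding block_ind_def by auto
  have stationary: "law_Z \<alpha> \<mu> K (n + L) z = (\<Sum>y\<in>{y. y \<le> K \<and> block_ind K y = z}. geo_pi \<alpha> \<mu> K y)"
    for z
    unfolding law_Z_def using assms by (intro sum.cong) (simp_all add: geo_pi_invariant)
  have "cond_law_Z \<alpha> \<mu> K L x 0 = 1 - geoPpow \<alpha> \<mu> K L x K"
    using geoPpow_row_sum[OF assms(7,5), of \<alpha> \<mu> L]
    by (simp add: cond_law_Z_def free lessThan_Suc_atMost[symmetric])
  moreover have "law_Z \<alpha> \<mu> K (n + L) 0 = 1 - geo_pi \<alpha> \<mu> K K"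
    using geo_pi_sum[OF assms(1-4,6), of K]
    by (simp add: stationary free lessThan_Suc_atMost[symmetric])
  moreover have "cond_law_Z \<alpha> \<mu> K L x 1 = geoPpow \<alpha> \<mu> K L x K"
    unfolding cond_law_Z_def blocked by simp
  moreover have "law_Z \<alpha> \<mu> K (n + L) 1 = geo_pi \<alpha> \<mu> K K"
    unfolding stationary blocked by simp
  ultimately show ?thesis
    unfolding predictability_def tv01_eq by simp
qed

lemma sin_succ_add_sin_pred:
  fixes y \<theta> :: real
  shows "sin ((y + 1) * \<theta>) + sin ((y - 1) * \<theta>) = 2 * cos \<theta> * sin (y * \<theta>)"
  by (simp add: distrib_right left_diff_distrib sin_add sin_diff)

lemma sin_half_mult_sum_cos:
  fixes \<phi> :: real
  shows "2 * sin (\<phi> / 2) * (\<Sum>k=1..n. cos (real k * \<phi>)) = sin ((real n + 1/2) * \<phi>) - sin (\<phi> / 2)"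
proof (induction n)
  case 0
  then show ?case by simp
next
  case (Suc n)
  have "real (Suc n) * \<phi> + \<phi> / 2 = (real (Suc n) + 1/2) * \<phi>"
    and "real (Suc n) * \<phi> - \<phi> / 2 = (real n + 1/2) * \<phi>"
    by (simp_all add: algebra_simps)
  moreover have "2 * sin (\<phi> / 2) * cos (real (Suc n) * \<phi>)
      = sin (real (Suc n) * \<phi> + \<phi> / 2) - sin (real (Suc n) * \<phi> - \<phi> / 2)"
    unfolding sin_add sin_diff by simp
  ultimately show ?case using Suc by (simp add: distrib_left)
qed

lemma sum_cos_mult_angles:
  fixes K j :: nat
  assumes "0 < j" "j < 2 * (K + 1)"
  shows "(\<Sum>k=1..K. cos (real j * (real k * pi / real (K + 1)))) = - (1 + (-1) ^ j) / 2"
proof -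
  define \<phi> where "\<phi> = real j * pi / real (K + 1)"
  have "real j < 2 * real (K + 1)"
    using assms by linarith
  then have "real j * pi < 2 * real (K + 1) * pi"
    by simp
  then have "0 < \<phi> / 2" "\<phi> / 2 < pi"
    using assms by (simp_all add: \<phi>_def field_simps)
  then have sin_pos: "sin (\<phi> / 2) > 0"
    by (rule sin_gt_zero)
  have "(real K + 1/2) * \<phi> = real j * pi - \<phi> / 2"
    unfolding \<phi>_def by (simp add: field_simps)
  then have "sin ((real K + 1/2) * \<phi>) = - ((-1) ^ j * sin (\<phi> / 2))"
    by (simp add: sin_diff)
  then have "sin (\<phi> / 2) * (2 * (\<Sum>k=1..K. cos (real k * \<phi>)) + (1 + (-1) ^ j)) = 0"
    using sin_half_mult_sum_cos[of \<phi> K] by (simp add: algebra_simps)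
  then have "2 * (\<Sum>k=1..K. cos (real k * \<phi>)) + (1 + (-1) ^ j) = 0"
    using sin_pos by simp
  moreover have "real j * (real k * pi / real (K + 1)) = real k * \<phi>" for k
    by (simp add: \<phi>_def)
  ultimately show ?thesis
    by (simp only:) (simp add: field_simps)
qed

lemma sum_sin_mult_sin_angles_le:
  fixes K i j :: nat
  assumes "1 \<le> i" "i \<le> j" "j \<le> K"
  shows "(\<Sum>k=1..K. sin (real i * (real k * pi / real (K + 1))) * sin (real j * (real k * pi / real (K + 1))))
       = (if i = j then real (K + 1) / 2 else 0)"
proof -
  have product: "sin (real i * t) * sin (real j * t) = (cos (real (j - i) * t) - cos (real (j + i) * t)) / 2"
    for t
  proof -
    have "real (j - i) * t = real j * t - real i * t" "real (j + i) * t = real j * t + real i * t"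
      using assms by (simp_all add: of_nat_diff algebra_simps)
    then show ?thesis by (simp add: cos_add cos_diff)
  qed
  have sum_plus: "(\<Sum>k=1..K. cos (real (j + i) * (real k * pi / real (K + 1)))) = - (1 + (-1) ^ (j + i)) / 2"
    using assms by (intro sum_cos_mult_angles) auto
  have expand: "(\<Sum>k=1..K. sin (real i * (real k * pi / real (K + 1))) * sin (real j * (real k * pi / real (K + 1))))
      = ((\<Sum>k=1..K. cos (real (j - i) * (real k * pi / real (K + 1))))
         - (\<Sum>k=1..K. cos (real (j + i) * (real k * pi / real (K + 1))))) / 2"
    unfolding product sum_divide_distrib[symmetric] sum_subtractf ..
  show ?thesis
  proof (cases "i = j")
    case True
    then have "(-1::real) ^ (j + i) = 1"
      by (simp flip: mult_2)
    then show ?thesis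
      unfolding expand using sum_plus True by simp
  next
    case False
    obtain d where "j = i + d"
      using assms le_Suc_ex by blast
    then have "(-1::real) ^ (j + i) = (-1) ^ (j - i)"
      by (simp add: power_add flip: mult_2)
    moreover have "(\<Sum>k=1..K. cos (real (j - i) * (real k * pi / real (K + 1)))) = - (1 + (-1) ^ (j - i)) / 2"
      using assms False by (intro sum_cos_mult_angles) auto
    ultimately show ?thesis
      unfolding expand using sum_plus False by simp
  qed
qed

lemma sum_sin_mult_sin_angles:
  fixes K i j :: nat
  assumes "1 \<le> i" "i \<le> K" "1 \<le> j" "j \<le> K"
  shows "(\<Sum>k=1..K. sin (real i * (real k * pi / real (K + 1))) * sin (real j * (real k * pi / real (K + 1))))
       = (if i = j then real (K + 1) / 2 else 0)"
proof (cases "i \<le> j")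
  case True
  then show ?thesis using sum_sin_mult_sin_angles_le assms by simp
next
  case False
  then show ?thesis using sum_sin_mult_sin_angles_le[of j i K] assms by (simp add: mult.commute)
qed

lemma sum_power_mult_sin_telescope:
  fixes s \<theta> :: real
  shows "(\<Sum>y\<le>n. s ^ y * (sin (real y * \<theta>) - s * sin ((real y + 1) * \<theta>)))
       = - (s ^ (n + 1) * sin ((real n + 1) * \<theta>))"
  by (induction n) (simp_all add: algebra_simps)

(* With s = sqrt beta, y \<mapsto> s^(K-y) * geo_mode s K k y is the k-th eigenvector of P, and
   s^(K-y) * geo_mode_sum s K y is the non-constant part of the indicator of K in that basis. *)
definition geo_angle :: "nat \<Rightarrow> nat \<Rightarrow> real" where
  "geo_angle K k = real k * pi / real (K + 1)"

definition geo_mode :: "real \<Rightarrow> nat \<Rightarrow> nat \<Rightarrow> nat \<Rightarrow> real" where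
  "geo_mode s K k y = sin (real y * geo_angle K k) - s * sin ((real y + 1) * geo_angle K k)"

definition geo_mode_norm :: "real \<Rightarrow> nat \<Rightarrow> nat \<Rightarrow> real" where
  "geo_mode_norm s K k = 1 - 2 * s * cos (geo_angle K k) + s\<^sup>2"

definition geo_mode_sum :: "real \<Rightarrow> nat \<Rightarrow> nat \<Rightarrow> real" where
  "geo_mode_sum s K y = 2 / real (K + 1) *
     (\<Sum>k=1..K. geo_mode s K k y * sin (real K * geo_angle K k) / geo_mode_norm s K k)"

lemma sin_Suc_mult_geo_angle: "sin ((real K + 1) * geo_angle K k) = 0"
proof -
  have "(real K + 1) * geo_angle K k = real k * pi"
    by (simp add: geo_angle_def field_simps)
  then show ?thesis by simp
qed

lemma geo_mode_norm_pos:
  assumes "1 \<le> k" "k \<le> K"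
  shows "geo_mode_norm s K k > 0"
proof -
  have "real k * pi < real (K + 1) * pi"
    using assms by simp
  then have "0 < geo_angle K k" "geo_angle K k < pi"
    using assms by (simp_all add: geo_angle_def field_simps)
  then have "sin (geo_angle K k) > 0"
    by (rule sin_gt_zero)
  moreover have "geo_mode_norm s K k = (s - cos (geo_angle K k))\<^sup>2 + (sin (geo_angle K k))\<^sup>2"
    unfolding geo_mode_norm_def using sin_cos_squared_add[of "geo_angle K k"]
    by (simp add: power2_eq_square algebra_simps)
  ultimately show ?thesis
    by (simp add: add_nonneg_pos)
qed

lemma geo_mode_diff:
  assumes "1 \<le> y"
  shows "geo_mode s K k y - s * geo_mode s K k (y - 1) = geo_mode_norm s K k * sin (real y * geo_angle K k)"
proof -
  have "real (y - 1) = real y - 1" "real (y - 1) + 1 = real y"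
    using assms by (simp_all add: of_nat_diff)
  then have "geo_mode s K k y - s * geo_mode s K k (y - 1)
      = (1 + s\<^sup>2) * sin (real y * geo_angle K k)
        - s * (sin ((real y + 1) * geo_angle K k) + sin ((real y - 1) * geo_angle K k))"
    unfolding geo_mode_def by (simp add: algebra_simps power2_eq_square)
  then show ?thesis
    unfolding sin_succ_add_sin_pred geo_mode_norm_def by (simp add: algebra_simps)
qed

lemma geo_mode_sum_diff:
  assumes "1 \<le> y" "y \<le> K"
  shows "geo_mode_sum s K y - s * geo_mode_sum s K (y - 1) = (if y = K then 1 else 0)"
proof -
  have "geo_mode_sum s K y - s * geo_mode_sum s K (y - 1)
      = 2 / real (K + 1) * (\<Sum>k=1..K. (geo_mode s K k y - s * geo_mode s K k (y - 1))
          * (sin (real K * geo_angle K k) / geo_mode_norm s K k))"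
    unfolding geo_mode_sum_def
    by (simp add: left_diff_distrib right_diff_distrib sum_subtractf sum_distrib_left mult_ac)
  also have "\<dots> = 2 / real (K + 1) * (\<Sum>k=1..K. sin (real y * geo_angle K k) * sin (real K * geo_angle K k))"
  proof -
    have "geo_mode_norm s K k \<noteq> 0" if "k \<in> {1..K}" for k
      using geo_mode_norm_pos[of k K s] that by simp
    then show ?thesis
      unfolding geo_mode_diff[OF assms(1)] by simp
  qed
  also have "\<dots> = (if y = K then 1 else 0)"
    using sum_sin_mult_sin_angles[of y K K] assms by (simp add: geo_angle_def)
  finally show ?thesis .
qed

lemma geo_mode_sum_eq:
  assumes "1 \<le> K" "y \<le> K"
  shows "geo_mode_sum s K y = s ^ y * geo_mode_sum s K 0 + (if y = K then 1 else 0)"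
  using assms(2)
proof (induction y)
  case 0
  then show ?case using assms(1) by simp
next
  case (Suc y)
  then show ?case
    using geo_mode_sum_diff[of "Suc y" K s] assms(1) by (simp add: algebra_simps)
qed

lemma geo_mode_sum_weighted: "(\<Sum>y\<le>K. s ^ y * geo_mode_sum s K y) = 0"
proof -
  have "(\<Sum>y\<le>K. s ^ y * geo_mode_sum s K y)
      = (\<Sum>k=1..K. 2 / real (K + 1) * (sin (real K * geo_angle K k) / geo_mode_norm s K k)
          * (\<Sum>y\<le>K. s ^ y * geo_mode s K k y))"
    unfolding geo_mode_sum_def sum_distrib_left
    by (subst sum.swap) (simp add: algebra_simps)
  also have "\<dots> = 0"
    unfolding geo_mode_def sum_power_mult_sin_telescope sin_Suc_mult_geo_angle by simp
  finally show ?thesis .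
qed

lemma geo_mode_sum_0:
  assumes "1 \<le> K"
  shows "geo_mode_sum s K 0 = - (s ^ K) / (\<Sum>i\<le>K. (s\<^sup>2) ^ i)"
proof -
  have pos: "(\<Sum>i\<le>K. (s\<^sup>2) ^ i) > 0"
    by (intro sum_pos2[of _ 0]) auto
  have "s ^ y * geo_mode_sum s K y = geo_mode_sum s K 0 * (s\<^sup>2) ^ y + (if y = K then s ^ K else 0)"
    if "y \<le> K" for y
    using geo_mode_sum_eq[OF assms that, of s] by (simp add: power2_eq_square power_mult_distrib algebra_simps)
  then have "0 = geo_mode_sum s K 0 * (\<Sum>y\<le>K. (s\<^sup>2) ^ y) + s ^ K"
    using geo_mode_sum_weighted[of s K] by (simp add: sum.distrib sum_distrib_left)
  then show ?thesis
    using pos by (simp add: field_simps)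
qed

lemma indicator_geo_mode_expansion:
  assumes "1 \<le> K" "y \<le> K"
  shows "s ^ (K - y) * geo_mode_sum s K y = (if y = K then 1 else 0) - (s\<^sup>2) ^ K / (\<Sum>i\<le>K. (s\<^sup>2) ^ i)"
proof -
  have "s ^ (K - y) * s ^ y = s ^ K" "(s\<^sup>2) ^ K = s ^ K * s ^ K"
    using assms by (simp_all add: power2_eq_square power_mult_distrib flip: power_add)
  then show ?thesis
    unfolding geo_mode_sum_eq[OF assms] geo_mode_sum_0[OF assms(1)]
    by (simp add: algebra_simps)
qed

lemma geoP_sin_eigenvector:
  fixes \<alpha> \<mu> s \<theta> :: real and K x :: nat
  assumes K: "1 \<le> K" and x: "x \<le> K" and root: "sin ((real K + 1) * \<theta>) = 0"
    and balance: "\<alpha> * (1 - \<mu>) = \<mu> * (1 - \<alpha>) * s\<^sup>2"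
  shows "(\<Sum>m\<le>K. geoP \<alpha> \<mu> K x m * (s^(K-m) * (sin (real m * \<theta>) - s * sin ((real m + 1) * \<theta>))))
     = (\<alpha> * \<mu> + (1 - \<alpha>) * (1 - \<mu>) + 2 * (\<mu> * (1 - \<alpha>) * s) * cos \<theta>)
        * (s^(K-x) * (sin (real x * \<theta>) - s * sin ((real x + 1) * \<theta>)))"
  (is "?L = _")
proof -
  define q where "q = \<mu> * (1 - \<alpha>)"
  define c where "c = cos \<theta>"
  have balance_q: "\<alpha> * (1 - \<mu>) = q * s\<^sup>2" using balance q_def by simp
  have diagonal: "\<alpha> * \<mu> + (1 - \<alpha>) * (1 - \<mu>) = 1 - \<alpha> * (1 - \<mu>) - q" unfolding q_def by (simp add: algebra_simps)
  let ?v = "\<lambda>m. s^(K-m) * (sin (real m * \<theta>) - s * sin ((real m + 1) * \<theta>))"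
  have row: "?L = (if x < K then \<alpha>*(1-\<mu>) * ?v (x+1) else 0)
     + (if 0 < x then \<mu>*(1-\<alpha>) * ?v (x-1) else 0)
     + (if x = 0 then 1 - \<alpha> * (1 - \<mu>) else if x = K then 1 - \<mu> * (1 - \<alpha>) else \<alpha> * \<mu> + (1 - \<alpha>) * (1 - \<mu>)) * ?v x"
    by (rule geoP_row_expand[OF x])
  consider (zero) "x = 0" | (top) "x = K" | (mid) "0 < x" "x < K" using x K by linarith
  then show ?thesis
  proof cases
    case zero
    define P where "P = s^(K-1)"
    have pw: "s^K = s * P" "s^(K - Suc 0) = P" unfolding P_def using K
      by (simp_all add: power_Suc[symmetric] del: power_Suc)
    have I: "sin (2 * \<theta>) = 2 * c * sin \<theta>" unfolding c_def by (simp add: sin_double)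
    show ?thesis unfolding row using zero K
      apply (simp add: pw balance_q diagonal q_def[symmetric] c_def[symmetric])
      using I by (simp add: algebra_simps power2_eq_square)
  next
    case top
    define Y where "Y = real K - 1"
    have RK: "real K = Y + 1" "real (K - 1) = Y" using K unfolding Y_def by (simp_all add: of_nat_diff)
    have pw: "s^(K-K) = 1" "s^(K-(K-1)) = s" using K by simp_all
    have I: "sin ((Y + 1 + 1) * \<theta>) + sin (Y * \<theta>) = 2 * c * sin ((Y+1) * \<theta>)"
      using sin_succ_add_sin_pred[of "Y+1" \<theta>] unfolding c_def by simp
    have z': "sin ((Y + 1 + 1) * \<theta>) = 0" using root RK by simp
    show ?thesis unfolding row using top K
      apply (simp add: pw balance_q diagonal q_def[symmetric] c_def[symmetric] RK)
      using I z' by (simp add: algebra_simps power2_eq_square)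
  next
    case mid
    define P where "P = s^(K-(x+1))"
    have d1: "K - x = Suc (K - Suc x)" "K - (x-1) = Suc (Suc (K - Suc x))" "Suc K - x = Suc (Suc (K - Suc x))"
      using mid by arith+
    have pw: "s^(K-x) = s * P" "s^(K-(x-1)) = s * s * P" "s^(Suc K - x) = s * s * P" "s^(K - Suc x) = P"
      unfolding P_def d1 by simp_all
    define Y where "Y = real x"
    have RX: "real (x+1) = Y + 1" "real (x - 1) = Y - 1" "real x = Y" using mid unfolding Y_def by (simp_all add: of_nat_diff)
    have I1: "sin ((Y + 1) * \<theta>) + sin ((Y - 1) * \<theta>) = 2 * c * sin (Y * \<theta>)"
      using sin_succ_add_sin_pred[of Y \<theta>] unfolding c_def by simp
    have I2: "sin ((Y + 1 + 1) * \<theta>) + sin (Y * \<theta>) = 2 * c * sin ((Y+1) * \<theta>)"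
      using sin_succ_add_sin_pred[of "Y+1" \<theta>] unfolding c_def by simp
    have e: "Y - 1 + 1 = Y" by simp
    show ?thesis unfolding row using mid
      apply (simp add: pw balance_q diagonal q_def[symmetric] c_def[symmetric] RX e)
      using I1 I2 apply (simp add: algebra_simps power2_eq_square)
      by algebra
  qed
qed

lemma powr_half_eq_sqrt_power:
  fixes b :: real
  assumes "0 < b"
  shows "b powr (real n / 2) = sqrt b ^ n"
proof -
  have "b powr (real n / 2) = sqrt (b powr real n)"
    using assms by (simp add: powr_half_sqrt_powr)
  also have "\<dots> = sqrt b ^ n"
    using assms by (simp only: powr_realpow real_sqrt_power)
  finally show ?thesis .
qed

lemma sqrt_geo_rates:
  assumes "0 < \<alpha>" "\<alpha> < 1" "0 < \<mu>" "\<mu> < 1"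
  shows "sqrt (\<alpha> * \<mu> * (1 - \<alpha>) * (1 - \<mu>)) = \<mu> * (1 - \<alpha>) * sqrt (geo_beta \<alpha> \<mu>)"
proof -
  have "\<alpha> * \<mu> * (1 - \<alpha>) * (1 - \<mu>) = (\<alpha> * (1 - \<mu>)) * (\<mu> * (1 - \<alpha>))"
    by (simp add: algebra_simps)
  also have "\<dots> = (\<mu> * (1 - \<alpha>))\<^sup>2 * geo_beta \<alpha> \<mu>"
    using geo_beta_balance[of \<mu> \<alpha>] assms by (simp add: power2_eq_square)
  finally show ?thesis
    using assms by (simp add: real_sqrt_mult)
qed

lemma geoPpow_to_K_spectral:
  assumes "\<mu> * (1 - \<alpha>) \<noteq> 0" "geo_beta \<alpha> \<mu> \<noteq> 1" "geo_beta \<alpha> \<mu> = s\<^sup>2" "1 \<le> K" "y \<le> K"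
  shows "geoPpow \<alpha> \<mu> K L y K = geo_pi \<alpha> \<mu> K K + 2 / real (K + 1) * s ^ (K - y) *
    (\<Sum>k=1..K. (\<alpha> * \<mu> + (1 - \<alpha>) * (1 - \<mu>) + 2 * (\<mu> * (1 - \<alpha>) * s) * cos (geo_angle K k)) ^ L
       / geo_mode_norm s K k * geo_mode s K k y * sin (real K * geo_angle K k))"
proof -
  define v where "v k m = s ^ (K - m) * geo_mode s K k m" for k m
  define \<gamma> where "\<gamma> k = \<alpha> * \<mu> + (1 - \<alpha>) * (1 - \<mu>) + 2 * (\<mu> * (1 - \<alpha>) * s) * cos (geo_angle K k)" for k
  define c where "c k = 2 / real (K + 1) * (sin (real K * geo_angle K k) / geo_mode_norm s K k)" for k
  let ?P = "geoPpow \<alpha> \<mu> K L y"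
  have "\<alpha> * (1 - \<mu>) = \<mu> * (1 - \<alpha>) * s\<^sup>2"
    using geo_beta_balance[OF assms(1)] assms(3) by simp
  then have eigen: "(\<Sum>j\<le>K. geoP \<alpha> \<mu> K m j * v k j) = \<gamma> k * v k m" if "m \<le> K" for k m
    unfolding v_def \<gamma>_def geo_mode_def
    using geoP_sin_eigenvector[OF assms(4) that sin_Suc_mult_geo_angle] by blast
  have delta: "(if m = K then 1 else 0) = geo_pi \<alpha> \<mu> K K + (\<Sum>k=1..K. c k * v k m)" if "m \<le> K" for m
  proof -
    have "(\<Sum>k=1..K. c k * v k m) = s ^ (K - m) * geo_mode_sum s K m"
      unfolding c_def v_def geo_mode_sum_def sum_distrib_left by (intro sum.cong) simp_all
    then show ?thesis
      using indicator_geo_mode_expansion[OF assms(4) that] geo_pi_eq[OF assms(2)] assms(3) by simp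
  qed
  have "?P m * (if m = K then 1 else 0) = (if m = K then ?P K else 0)" for m
    by simp
  then have "geoPpow \<alpha> \<mu> K L y K = (\<Sum>m\<le>K. ?P m * (if m = K then 1 else 0))"
    by (simp add: sum.delta')
  also have "\<dots> = (\<Sum>m\<le>K. geo_pi \<alpha> \<mu> K K * ?P m + (\<Sum>k=1..K. c k * (?P m * v k m)))"
    using delta by (intro sum.cong) (simp_all add: distrib_left sum_distrib_left mult_ac)
  also have "\<dots> = geo_pi \<alpha> \<mu> K K * (\<Sum>m\<le>K. ?P m) + (\<Sum>k=1..K. c k * (\<Sum>m\<le>K. ?P m * v k m))"
    unfolding sum.distrib sum_distrib_left by (subst sum.swap) (rule refl)
  also have "\<dots> = geo_pi \<alpha> \<mu> K K + (\<Sum>k=1..K. c k * (\<gamma> k ^ L * v k y))"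
    using geoPpow_row_sum[OF assms(5,4)] geoPpow_right_eigen[OF eigen assms(5)] by simp
  finally show ?thesis
    unfolding c_def v_def \<gamma>_def sum_distrib_left by (simp add: mult_ac)
qed

theorem proposition2:
  fixes \<alpha> \<mu> :: real and K n L x :: nat
  assumes "0 < \<alpha>" "\<alpha> < 1" "0 < \<mu>" "\<mu> < 1" "1 \<le> K"
    and "geo_beta \<alpha> \<mu> \<noteq> 1" and "x \<le> K"
  shows "predictability \<alpha> \<mu> K n L x = \<bar>geoPpow \<alpha> \<mu> K L x K - geo_pi \<alpha> \<mu> K K\<bar>
    \<and> predictability \<alpha> \<mu> K n L x =
      \<bar>2 / real (K + 1) * geo_beta \<alpha> \<mu> powr ((real K - real x) / 2) *
        (\<Sum>k=1..K.
          (\<alpha> * \<mu> + (1 - \<alpha>) * (1 - \<mu>)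
             + 2 * sqrt (\<alpha> * \<mu> * (1 - \<alpha>) * (1 - \<mu>)) * cos (real k * pi / real (K + 1))) ^ L
          / (1 - 2 * sqrt (geo_beta \<alpha> \<mu>) * cos (real k * pi / real (K + 1)) + geo_beta \<alpha> \<mu>)
          * (sin (real x * real k * pi / real (K + 1))
             - sqrt (geo_beta \<alpha> \<mu>) * sin ((real x + 1) * real k * pi / real (K + 1)))
          * sin (real K * real k * pi / real (K + 1)))\<bar>"
proof -
  define s where "s = sqrt (geo_beta \<alpha> \<mu>)"
  have "0 < geo_beta \<alpha> \<mu>"
    using geo_beta_pos assms by blast
  then have s2: "geo_beta \<alpha> \<mu> = s\<^sup>2"
    and powr_eq: "geo_beta \<alpha> \<mu> powr ((real K - real x) / 2) = s ^ (K - x)"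
    using powr_half_eq_sqrt_power[of "geo_beta \<alpha> \<mu>" "K - x"] assms(7)
    by (simp_all add: s_def of_nat_diff)
  have "geoPpow \<alpha> \<mu> K L x K - geo_pi \<alpha> \<mu> K K = 2 / real (K + 1) * s ^ (K - x) *
    (\<Sum>k=1..K. (\<alpha> * \<mu> + (1 - \<alpha>) * (1 - \<mu>) + 2 * (\<mu> * (1 - \<alpha>) * s) * cos (geo_angle K k)) ^ L
       / geo_mode_norm s K k * geo_mode s K k x * sin (real K * geo_angle K k))"
    using geoPpow_to_K_spectral[of \<mu> \<alpha> s K x L] s2 assms by simp
  then show ?thesis
    using predictability_eq_abs_diff[OF assms]
    unfolding sqrt_geo_rates[OF assms(1-4)] s_def[symmetric] powr_eq
    by (simp add: s2 geo_angle_def geo_mode_def geo_mode_norm_def mult.assoc)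
qed

end
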